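(* (a) If $\Delta\vdash t$ is a closed nominal term-in-context, then its translation $\mathcal{T}(\Delta,t)$ is a closed CRS meta-term. (b) Moreover, if $t$ is ground, then $\mathcal{T}(\Delta,t)$ is a CRS term.
   Context: Nominal terms: $s,t ::= a \mid \pi\cdot X \mid [a]s \mid f\,s \mid (s_1,\ldots,s_n)$ over atoms $a$, variables $X$, function symbols $f$ with arities, and finite-support permutations $\pi$ of atoms. A freshness context $\Delta$ is a set of constraints $a\#X$. Ground terms contain no variables. $\Delta\vdash t$ is closed if: (1) every atom occurrence $a$ in $t$ lies under an abstraction $[a]$; (2) if $\pi\cdot X$ is in the scope of an abstraction of $\pi(a)$ then every occurrence $\pi'\cdot X$ of $X$ in $t$ is in the scope of an abstraction of $\pi'(a)$, or $a\#X\in\Delta$; (3) for two occurrences $\pi_1\cdot X,\pi_2\cdot X$ and $a$ with $\pi_1(a)\neq\pi_2(a)$, if $a$ is not abstracted in one of the occurrences then $a\#X\in\Delta$. CRS meta-terms: $a\mid Z^n(t_1,\dots,t_n)\mid[a]t\mid f\,t\mid(t_1,\dots,t_n)$, where each meta-variable $Z^n$ has a fixed arity $n$ respected by all its meta-applications; a meta-term is closed if every variable occurrence is bound; a CRS term contains no meta-variables. Translation: $\Lambda_t(X)$ is the set of atoms $a$ such that some occurrence of $X$ in $t$ is in the scope of $[a]$. With a fixed total order on atoms, $\mathcal{T}(\Delta,t)$ is obtained from $t$ by replacing each occurrence $\pi\cdot X$ by $X(\pi\cdot xs)$, where $xs$ is the ascending list of $\{\pi^{-1}(a)\mid a\in\Lambda_t(X)\}\setminus\{a\mid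 a\#X\in\Delta\}$ and $\pi\cdot xs$ applies $\pi$ elementwise (no arguments if empty); atoms, abstractions, function applications and tuples are kept unchanged (atoms become CRS variables, nominal variables become meta-variables). *)

theory Defs
  imports Main "HOL-Combinatorics.Perm"
begin

datatype ('a, 'v, 'f) nterm =
    NAtom 'a
  | NSusp "'a perm" 'v
  | NAbs 'a "('a, 'v, 'f) nterm"
  | NFun 'f "('a, 'v, 'f) nterm"
  | NTup "('a, 'v, 'f) nterm list"

fun occs :: "'a set \<Rightarrow> ('a, 'v, 'f) nterm \<Rightarrow> ('a perm \<times> 'v \<times> 'a set) set" where
  "occs B (NAtom a) = {}"
| "occs B (NSusp p X) = {(p, X, B)}"
| "occs B (NAbs a t) = occs (insert a B) t"
| "occs B (NFun f t) = occs B t"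
| "occs B (NTup ts) = (\<Union>t\<in>set ts. occs B t)"

fun atoms_bound :: "'a set \<Rightarrow> ('a, 'v, 'f) nterm \<Rightarrow> bool" where
  "atoms_bound B (NAtom a) = (a \<in> B)"
| "atoms_bound B (NSusp p X) = True"
| "atoms_bound B (NAbs a t) = atoms_bound (insert a B) t"
| "atoms_bound B (NFun f t) = atoms_bound B t"
| "atoms_bound B (NTup ts) = (\<forall>t\<in>set ts. atoms_bound B t)"

text \<open>Freshness context: a set of pairs (a, X) standing for a # X.\<close>
type_synonym ('a, 'v) fctx = "('a \<times> 'v) set"

definition nclosed :: "('a, 'v) fctx \<Rightarrow> ('a, 'v, 'f) nterm \<Rightarrow> bool" where
  "nclosed \<Delta> t \<longleftrightarrow>
     atoms_bound {} t \<and>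
     (\<forall>(p1, X, B1)\<in>occs {} t. \<forall>(p2, Y, B2)\<in>occs {} t. X = Y \<longrightarrow>
        (\<forall>a. Perm.apply p1 a \<in> B1 \<longrightarrow> Perm.apply p2 a \<in> B2 \<or> (a, X) \<in> \<Delta>)) \<and>
     (\<forall>(p1, X, B1)\<in>occs {} t. \<forall>(p2, Y, B2)\<in>occs {} t. X = Y \<longrightarrow>
        (\<forall>a. Perm.apply p1 a \<noteq> Perm.apply p2 a \<longrightarrow> (Perm.apply p1 a \<notin> B1 \<or> Perm.apply p2 a \<notin> B2) \<longrightarrow> (a, X) \<in> \<Delta>))"

definition ground :: "('a, 'v, 'f) nterm \<Rightarrow> bool" where
  "ground t \<longleftrightarrow> occs {} t = {}"

definition Lam :: "('a, 'v, 'f) nterm \<Rightarrow> 'v \<Rightarrow> 'a set" where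
  "Lam t X = {a. \<exists>p B. (p, X, B) \<in> occs {} t \<and> a \<in> B}"

text \<open>CRS meta-terms: atoms are CRS variables, 'v are meta-variables.\<close>
datatype ('a, 'v, 'f) mterm =
    MVar 'a
  | MApp 'v "('a, 'v, 'f) mterm list"
  | MAbs 'a "('a, 'v, 'f) mterm"
  | MFun 'f "('a, 'v, 'f) mterm"
  | MTup "('a, 'v, 'f) mterm list"

fun mapps :: "('a, 'v, 'f) mterm \<Rightarrow> ('v \<times> nat) set" where
  "mapps (MVar a) = {}"
| "mapps (MApp Z ts) = insert (Z, length ts) (\<Union>t\<in>set ts. mapps t)"
| "mapps (MAbs a t) = mapps t"
| "mapps (MFun f t) = mapps t"
| "mapps (MTup ts) = (\<Union>t\<in>set ts. mapps t)"

fun mbound :: "'a set \<Rightarrow> ('a, 'v, 'f) mterm \<Rightarrow> bool" where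
  "mbound B (MVar a) = (a \<in> B)"
| "mbound B (MApp Z ts) = (\<forall>t\<in>set ts. mbound B t)"
| "mbound B (MAbs a t) = mbound (insert a B) t"
| "mbound B (MFun f t) = mbound B t"
| "mbound B (MTup ts) = (\<forall>t\<in>set ts. mbound B t)"

definition wf_mterm :: "('a, 'v, 'f) mterm \<Rightarrow> bool" where
  "wf_mterm t \<longleftrightarrow> (\<exists>ar :: 'v \<Rightarrow> nat. \<forall>(Z, n)\<in>mapps t. n = ar Z)"

definition closed_mterm :: "('a, 'v, 'f) mterm \<Rightarrow> bool" where
  "closed_mterm t \<longleftrightarrow> wf_mterm t \<and> mbound {} t"

definition crs_term :: "('a, 'v, 'f) mterm \<Rightarrow> bool" where
  "crs_term t \<longleftrightarrow> mapps t = {}"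

text \<open>The translation; L is Lambda_t of the whole term t.\<close>
fun tr :: "('a::linorder, 'v) fctx \<Rightarrow> ('v \<Rightarrow> 'a set) \<Rightarrow> ('a, 'v, 'f) nterm \<Rightarrow> ('a, 'v, 'f) mterm" where
  "tr \<Delta> L (NAtom a) = MVar a"
| "tr \<Delta> L (NSusp p X) =
     MApp X (map (\<lambda>b. MVar (Perm.apply p b))
       (sorted_list_of_set ({Perm.apply (inverse p) a | a. a \<in> L X} - {a. (a, X) \<in> \<Delta>})))"
| "tr \<Delta> L (NAbs a t) = MAbs a (tr \<Delta> L t)"
| "tr \<Delta> L (NFun f t) = MFun f (tr \<Delta> L t)"
| "tr \<Delta> L (NTup ts) = MTup (map (tr \<Delta> L) ts)"

definition translate :: "('a::linorder, 'v) fctx \<Rightarrow> ('a, 'v, 'f) nterm \<Rightarrow> ('a, 'v, 'f) mterm" where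
  "translate \<Delta> t = tr \<Delta> (Lam t) t"

end

theory Submission
  imports Defs
begin

text \<open>In a closed term, condition (2) says that an atom abstracted above one occurrence
  \<open>\<pi>\<cdot>X\<close> is abstracted above every occurrence (up to the respective permutations) unless it
  is fresh for \<open>X\<close>, and condition (3) excludes the remaining mismatches. Hence the argument
  list \<open>\<pi>\<^sup>-\<^sup>1\<cdot>(\<Lambda>\<^sub>t(X) \<setminus> \<Delta>)\<close> of an occurrence consists of the atoms \<open>c\<close>, not fresh for \<open>X\<close>,
  that every occurrence \<open>\<pi>'\<cdot>X\<close> sees bound as \<open>\<pi>'(c)\<close>. This set does not depend on the
  occurrence, so each meta-variable gets one arity, and every argument \<open>\<pi>(c)\<close> lies in the
  scope of an abstraction.\<close>

definition susp_args :: "('a, 'v) fctx \<Rightarrow> ('v \<Rightarrow> 'a set) \<Rightarrow> 'a perm \<Rightarrow> 'v \<Rightarrow> 'a set" where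
  "susp_args \<Delta> L p X = {Perm.apply (inverse p) a | a. a \<in> L X} - {a. (a, X) \<in> \<Delta>}"

lemma tr_NSusp:
  "tr \<Delta> L (NSusp p X) =
     MApp X (map (\<lambda>b. MVar (Perm.apply p b)) (sorted_list_of_set (susp_args \<Delta> L p X)))"
  by (simp add: susp_args_def)

declare tr.simps(2) [simp del]

lemma mem_susp_args_iff:
  "c \<in> susp_args \<Delta> L p X \<longleftrightarrow> Perm.apply p c \<in> L X \<and> (c, X) \<notin> \<Delta>"
proof -
  have "c \<in> {Perm.apply (inverse p) a | a. a \<in> L X} \<longleftrightarrow> Perm.apply p c \<in> L X"
  proof
    assume "c \<in> {Perm.apply (inverse p) a | a. a \<in> L X}"
    then show "Perm.apply p c \<in> L X" by (auto simp: apply_sequence)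
  next
    assume "Perm.apply p c \<in> L X"
    moreover have "c = Perm.apply (inverse p) (Perm.apply p c)" by (simp add: apply_sequence)
    ultimately show "c \<in> {Perm.apply (inverse p) a | a. a \<in> L X}" by blast
  qed
  then show ?thesis unfolding susp_args_def by blast
qed

lemma mapps_tr:
  "mapps (tr \<Delta> L s) = (\<lambda>(p, X, B). (X, card (susp_args \<Delta> L p X))) ` occs B0 s"
proof (induction s arbitrary: B0)
  case (NTup ts)
  then show ?case by (auto simp: image_UN)
qed (auto simp: tr_NSusp length_sorted_list_of_set)

lemma mbound_tr:
  assumes "atoms_bound B0 s"
    and "\<forall>(p, X, B)\<in>occs B0 s. \<forall>c\<in>susp_args \<Delta> L p X. Perm.apply p c \<in> B"
  shows "mbound B0 (tr \<Delta> L s)"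
  using assms
proof (induction s arbitrary: B0)
  case (NSusp p X)
  have mem_sorted: "x \<in> A" if "x \<in> set (sorted_list_of_set A)" for x and A :: "'a set"
    using that by (cases "finite A") auto
  from NSusp show ?case by (auto simp: tr_NSusp dest!: mem_sorted)
next
  case (NTup ts)
  then show ?case by fastforce
qed simp_all

lemma crs_term_tr_if_ground:
  assumes "ground t"
  shows "crs_term (tr \<Delta> L t)"
  using assms by (simp add: ground_def crs_term_def mapps_tr[of _ _ _ "{}"])

lemma nclosedD_atoms_bound: "nclosed \<Delta> t \<Longrightarrow> atoms_bound {} t"
  unfolding nclosed_def by blast

lemma nclosedD_scope:
  assumes "nclosed \<Delta> t" "(p1, X, B1) \<in> occs {} t" "(p2, X, B2) \<in> occs {} t"
    and "Perm.apply p1 a \<in> B1" "(a, X) \<notin> \<Delta>"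
  shows "Perm.apply p2 a \<in> B2"
  using assms unfolding nclosed_def by fast

lemma nclosedD_mismatch:
  assumes "nclosed \<Delta> t" "(p1, X, B1) \<in> occs {} t" "(p2, X, B2) \<in> occs {} t"
    and "Perm.apply p1 a \<noteq> Perm.apply p2 a" "(a, X) \<notin> \<Delta>"
  shows "Perm.apply p1 a \<in> B1 \<and> Perm.apply p2 a \<in> B2"
  using assms unfolding nclosed_def by fast

definition common_args :: "('a, 'v) fctx \<Rightarrow> ('a, 'v, 'f) nterm \<Rightarrow> 'v \<Rightarrow> 'a set" where
  "common_args \<Delta> t X =
     {c. (c, X) \<notin> \<Delta> \<and> (\<forall>p B. (p, X, B) \<in> occs {} t \<longrightarrow> Perm.apply p c \<in> B)}"

lemma susp_args_eq_common_args:
  assumes closed: "nclosed \<Delta> t" and occ: "(p, X, B) \<in> occs {} t"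
  shows "susp_args \<Delta> (Lam t) p X = common_args \<Delta> t X"
proof (intro set_eqI iffI)
  fix c
  assume "c \<in> susp_args \<Delta> (Lam t) p X"
  then have fresh: "(c, X) \<notin> \<Delta>" and "Perm.apply p c \<in> Lam t X"
    by (simp_all add: mem_susp_args_iff)
  then obtain p' B' where occ': "(p', X, B') \<in> occs {} t" and "Perm.apply p c \<in> B'"
    unfolding Lam_def by blast
  have "Perm.apply p c \<in> B"
  proof (cases "Perm.apply p c = Perm.apply p' c")
    case True
    with \<open>Perm.apply p c \<in> B'\<close> show ?thesis
      using nclosedD_scope[OF closed occ' occ _ fresh] by simp
  next
    case False
    then show ?thesis using nclosedD_mismatch[OF closed occ occ' _ fresh] by blast
  qed
  then show "c \<in> common_args \<Delta> t X"
    unfolding common_args_def using nclosedD_scope[OF closed occ] fresh by blast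
next
  fix c
  assume "c \<in> common_args \<Delta> t X"
  then show "c \<in> susp_args \<Delta> (Lam t) p X"
    using occ unfolding common_args_def Lam_def mem_susp_args_iff by blast
qed

lemma wf_translate:
  assumes "nclosed \<Delta> t"
  shows "wf_mterm (translate \<Delta> t)"
  unfolding wf_mterm_def translate_def mapps_tr[of _ _ _ "{}"]
  by (rule exI[of _ "\<lambda>X. card (common_args \<Delta> t X)"])
    (auto simp: susp_args_eq_common_args[OF assms])

lemma mbound_translate:
  assumes "nclosed \<Delta> t"
  shows "mbound {} (translate \<Delta> t)"
  unfolding translate_def
proof (rule mbound_tr)
  show "atoms_bound {} t" using assms by (rule nclosedD_atoms_bound)
  show "\<forall>(p, X, B)\<in>occs {} t. \<forall>c\<in>susp_args \<Delta> (Lam t) p X. Perm.apply p c \<in> B"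
    by (auto simp: susp_args_eq_common_args[OF assms] common_args_def)
qed

theorem mainTheorem5:
  fixes \<Delta> :: "('a::linorder, 'v) fctx" and t :: "('a, 'v, 'f) nterm"
  assumes "nclosed \<Delta> t"
  shows "closed_mterm (translate \<Delta> t) \<and> (ground t \<longrightarrow> crs_term (translate \<Delta> t))"
  using wf_translate[OF assms] mbound_translate[OF assms] crs_term_tr_if_ground
  unfolding closed_mterm_def translate_def by blast

end
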